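(* Let $V$ be a real separable Hilbert space, $T>0$, and let $A$, $B$ be linear operators on $V$ satisfying (A1), (A2), (B1), (B2), (B3), (AB) described in the context. Let $\{U(t,s),0\le s\le t\le T\}$ be the strongly continuous evolution system on $V$ generated by the operators $\bar A(t)=A-Ht^{2H-1}B^2$, $t\in[0,T]$, and set $U_Y(t,s)=S_B(B^H_t-B^H_s)\,U(t-s,0)$ for $0\le s\le t\le T$. Let $F:[0,T]\times V\to V$ be a measurable function such that (i) there exists $\bar L\in L^1([0,T])$ with $\|F(t,x)-F(t,y)\|_V\le \bar L(t)\|x-y\|_V$ for all $x,y\in V$, $t\in[0,T]$; (ii) there exists $\bar K\in L^1([0,T])$ with $\|F(t,0)\|_V\le \bar K(t)$ for all $t\in[0,T]$. Then for every initial value $x\in V$ and for $\mathbb P$-a.e. $\omega\in\Omega$ the equation $$y(t)=U_Y(t,0)x+\int_0^t U_Y(t,r)F\big(r,y(r)\big)\,dr,\qquad t\in[0,T],$$ has a unique solution $y$ in the space $\mathcal C([0,T];V)$.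
   Context: $(\Omega,\mathcal F,\mathbb P)$ is a complete probability space carrying a real-valued fractional Brownian motion $B^H=\{B^H_t,t\ge0\}$ with Hurst parameter $H\in(1/2,1)$, i.e. a centered Gaussian process with $\mathbb E[B^H_tB^H_s]=\frac12(t^{2H}+s^{2H}-|t-s|^{2H})$ (with continuous trajectories). $V$ is a real separable Hilbert space. The assumptions on the linear operators $A,B$ on $V$ are: (A1) $A$ is closed and densely defined with domain $D$; (A2) for some fixed $\omega<0$ the resolvent set of $A$ contains all $\lambda\in\mathbb C$ with $\mathrm{Re}\,\lambda\ge\omega$, and for some $M>0$, $\|R(\lambda,A)\|_{\mathcal L(V)}\le M/(|\lambda-\omega|+1)$ for all such $\lambda$ (so $A$ generates an analytic semigroup and fractional powers $(-A)^\alpha$ are defined); (B1) $D^*:=\mathrm{Dom}(A^* )\subset\mathrm{Dom}((B^* )^2)$; (B2) $B$ is closed, densely defined and generates a strongly continuous group $\{S_B(u),u\in\mathbb R\}$ on $V$; (B3) $B^2$ is closed and $\mathrm{Dom}(B^2)\supset\mathrm{Dom}((-A)^\alpha)$ for some $\alpha\in(0,1)$; (AB) $S_B(u)Ay=AS_B(u)y$ for all $u\in\mathbb R$, $y\in D$. Under (A1), (A2), (B2), (B3) the family $\bar A(t)=A-Ht^{2H-1}B^2$ (with domain $D$), $t\in[0,T]$, generates a strongly continuous evolution system $U(t,s)$ on $V$. *)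

theory Defs
  imports "HOL-Probability.Probability"
begin

text \<open>An unbounded operator is a pair (A, D) of a total function A and its domain D;
  values of A outside D are irrelevant.\<close>

definition lin_op :: "('v::real_vector \<Rightarrow> 'v) \<Rightarrow> 'v set \<Rightarrow> bool" where
  "lin_op A D \<longleftrightarrow> 0 \<in> D \<and>
     (\<forall>x\<in>D. \<forall>y\<in>D. x + y \<in> D \<and> A (x + y) = A x + A y) \<and>
     (\<forall>c x. x \<in> D \<longrightarrow> c *\<^sub>R x \<in> D \<and> A (c *\<^sub>R x) = c *\<^sub>R A x)"

definition closed_op :: "('v::real_normed_vector \<Rightarrow> 'v) \<Rightarrow> 'v set \<Rightarrow> bool" where
  "closed_op A D \<longleftrightarrow> closed ((\<lambda>x. (x, A x)) ` D)"

definition densely_defined :: "'v::real_normed_vector set \<Rightarrow> bool" where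
  "densely_defined D \<longleftrightarrow> closure D = UNIV"

text \<open>Resolvent condition (A2), expressed on the complexification V x V of the real space V:
  for lambda = a + i b the operator lambda - A acts on D x D by
  (x,y) |-> (a x - b y - A x, b x + a y - A y).  The condition says: for every lambda with
  Re lambda >= w this is onto V x V and satisfies the a-priori bound
  norm (x,y) <= M/(|lambda - w| + 1) * norm ((lambda - A)(x,y)), i.e. lambda is in the
  resolvent set and the resolvent has norm at most M/(|lambda - w| + 1).\<close>

definition cplx_shift :: "('v::real_vector \<Rightarrow> 'v) \<Rightarrow> complex \<Rightarrow> 'v \<times> 'v \<Rightarrow> 'v \<times> 'v" where
  "cplx_shift A l p = (Re l *\<^sub>R fst p - Im l *\<^sub>R snd p - A (fst p),
                       Im l *\<^sub>R fst p + Re l *\<^sub>R snd p - A (snd p))"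

definition resolvent_condition ::
  "('v::real_normed_vector \<Rightarrow> 'v) \<Rightarrow> 'v set \<Rightarrow> real \<Rightarrow> real \<Rightarrow> bool" where
  "resolvent_condition A D w M \<longleftrightarrow>
     (\<forall>l::complex. Re l \<ge> w \<longrightarrow>
        (\<forall>q. \<exists>p \<in> D \<times> D. cplx_shift A l p = q) \<and>
        (\<forall>p \<in> D \<times> D. norm p \<le> M / (cmod (l - complex_of_real w) + 1) * norm (cplx_shift A l p)))"

definition generates_C0_semigroup ::
  "('v::real_normed_vector \<Rightarrow> 'v) \<Rightarrow> 'v set \<Rightarrow> (real \<Rightarrow> 'v \<Rightarrow> 'v) \<Rightarrow> bool" where
  "generates_C0_semigroup A D S \<longleftrightarrow>
     (\<forall>t\<ge>0. bounded_linear (S t)) \<and> S 0 = id \<and>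
     (\<forall>s\<ge>0. \<forall>t\<ge>0. S (s + t) = S s \<circ> S t) \<and>
     (\<forall>x. continuous_on {0..} (\<lambda>t. S t x)) \<and>
     D = {x. \<exists>y. ((\<lambda>h. (1 / h) *\<^sub>R (S h x - x)) \<longlongrightarrow> y) (at_right 0)} \<and>
     (\<forall>x\<in>D. ((\<lambda>h. (1 / h) *\<^sub>R (S h x - x)) \<longlongrightarrow> A x) (at_right 0))"

definition generates_C0_group ::
  "('v::real_normed_vector \<Rightarrow> 'v) \<Rightarrow> 'v set \<Rightarrow> (real \<Rightarrow> 'v \<Rightarrow> 'v) \<Rightarrow> bool" where
  "generates_C0_group B D S \<longleftrightarrow>
     (\<forall>u. bounded_linear (S u)) \<and> S 0 = id \<and>
     (\<forall>u v. S (u + v) = S u \<circ> S v) \<and>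
     (\<forall>x. continuous_on UNIV (\<lambda>u. S u x)) \<and>
     D = {x. \<exists>y. ((\<lambda>h. (1 / h) *\<^sub>R (S h x - x)) \<longlongrightarrow> y) (at 0)} \<and>
     (\<forall>x\<in>D. ((\<lambda>h. (1 / h) *\<^sub>R (S h x - x)) \<longlongrightarrow> B x) (at 0))"

definition semigroup_of :: "('v::real_normed_vector \<Rightarrow> 'v) \<Rightarrow> 'v set \<Rightarrow> real \<Rightarrow> 'v \<Rightarrow> 'v" where
  "semigroup_of A D = (SOME S. generates_C0_semigroup A D S)"

text \<open>Domain of the fractional power (-A)^alpha = range of
  (-A)^(-alpha) x = 1/Gamma(alpha) * int_0^infty t^(alpha-1) e^(tA) x dt.\<close>
definition frac_pow_dom ::
  "('v::{banach, second_countable_topology} \<Rightarrow> 'v) \<Rightarrow> 'v set \<Rightarrow> real \<Rightarrow> 'v set" where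
  "frac_pow_dom A D \<alpha> =
     range (\<lambda>x. (1 / Gamma \<alpha>) *\<^sub>R
        (set_lebesgue_integral lborel {0<..} (\<lambda>t. t powr (\<alpha> - 1) *\<^sub>R semigroup_of A D t x)))"

definition adj_dom :: "('v::real_inner \<Rightarrow> 'v) \<Rightarrow> 'v set \<Rightarrow> 'v set" where
  "adj_dom A D = {y. \<exists>z. \<forall>x\<in>D. inner (A x) y = inner x z}"

definition adj :: "('v::real_inner \<Rightarrow> 'v) \<Rightarrow> 'v set \<Rightarrow> 'v \<Rightarrow> 'v" where
  "adj A D y = (THE z. \<forall>x\<in>D. inner (A x) y = inner x z)"

definition adj_sq_dom :: "('v::real_inner \<Rightarrow> 'v) \<Rightarrow> 'v set \<Rightarrow> 'v set" where
  "adj_sq_dom B D = {y \<in> adj_dom B D. adj B D y \<in> adj_dom B D}"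

definition sq_dom :: "('v \<Rightarrow> 'v) \<Rightarrow> 'v set \<Rightarrow> 'v set" where
  "sq_dom B D = {x \<in> D. B x \<in> D}"

definition evolution_system_gen ::
  "(real \<Rightarrow> 'v::real_normed_vector \<Rightarrow> 'v) \<Rightarrow> 'v set \<Rightarrow> real \<Rightarrow> (real \<Rightarrow> real \<Rightarrow> 'v \<Rightarrow> 'v) \<Rightarrow> bool" where
  "evolution_system_gen Abar D T U \<longleftrightarrow>
     (\<forall>s t. 0 \<le> s \<and> s \<le> t \<and> t \<le> T \<longrightarrow> bounded_linear (U t s)) \<and>
     (\<forall>s\<in>{0..T}. U s s = id) \<and>
     (\<forall>s r t. 0 \<le> s \<and> s \<le> r \<and> r \<le> t \<and> t \<le> T \<longrightarrow> U t r \<circ> U r s = U t s) \<and>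
     (\<forall>x. continuous_on {(t, s). 0 \<le> s \<and> s \<le> t \<and> t \<le> T} (\<lambda>(t, s). U t s x)) \<and>
     (\<forall>s t x. 0 \<le> s \<and> s < t \<and> t \<le> T \<longrightarrow>
        U t s x \<in> D \<and>
        ((\<lambda>\<tau>. U \<tau> s x) has_vector_derivative Abar t (U t s x)) (at t within {s..T}))"

definition gaussian_rv :: "'w measure \<Rightarrow> ('w \<Rightarrow> real) \<Rightarrow> bool" where
  "gaussian_rv M X \<longleftrightarrow> X \<in> borel_measurable M \<and>
     ((\<exists>\<mu> \<sigma>. 0 < \<sigma> \<and> distributed M lborel X (normal_density \<mu> \<sigma>)) \<or>
      (\<exists>c. AE \<omega> in M. X \<omega> = c))"

definition fBm :: "'w measure \<Rightarrow> real \<Rightarrow> (real \<Rightarrow> 'w \<Rightarrow> real) \<Rightarrow> bool" where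
  "fBm M H BH \<longleftrightarrow>
     (\<forall>I c. finite I \<and> I \<subseteq> {0..} \<longrightarrow> gaussian_rv M (\<lambda>\<omega>. \<Sum>t\<in>I. c t * BH t \<omega>)) \<and>
     (\<forall>t\<ge>0. integrable M (BH t) \<and> integral\<^sup>L M (BH t) = 0) \<and>
     (\<forall>t\<ge>0. \<forall>s\<ge>0. integrable M (\<lambda>\<omega>. BH t \<omega> * BH s \<omega>) \<and>
        integral\<^sup>L M (\<lambda>\<omega>. BH t \<omega> * BH s \<omega>) =
          (t powr (2 * H) + s powr (2 * H) - \<bar>t - s\<bar> powr (2 * H)) / 2) \<and>
     (\<forall>\<omega>\<in>space M. continuous_on {0..} (\<lambda>t. BH t \<omega>))"

definition UY :: "(real \<Rightarrow> 'v \<Rightarrow> 'v) \<Rightarrow> (real \<Rightarrow> real \<Rightarrow> 'v \<Rightarrow> 'v) \<Rightarrow> (real \<Rightarrow> 'w \<Rightarrow> real)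
    \<Rightarrow> 'w \<Rightarrow> real \<Rightarrow> real \<Rightarrow> 'v \<Rightarrow> 'v" where
  "UY SB U BH \<omega> t s z = SB (BH t \<omega> - BH s \<omega>) (U (t - s) 0 z)"

definition is_solution ::
  "(real \<Rightarrow> 'v::{banach, second_countable_topology} \<Rightarrow> 'v) \<Rightarrow> (real \<Rightarrow> real \<Rightarrow> 'v \<Rightarrow> 'v)
    \<Rightarrow> (real \<Rightarrow> 'w \<Rightarrow> real) \<Rightarrow> 'w \<Rightarrow> (real \<Rightarrow> 'v \<Rightarrow> 'v) \<Rightarrow> real \<Rightarrow> 'v \<Rightarrow> (real \<Rightarrow> 'v) \<Rightarrow> bool" where
  "is_solution SB U BH \<omega> F T x y \<longleftrightarrow>
     continuous_on {0..T} y \<and>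
     (\<forall>t\<in>{0..T}.
        set_integrable lborel {0..t} (\<lambda>r. UY SB U BH \<omega> t r (F r (y r))) \<and>
        y t = UY SB U BH \<omega> t 0 x +
              set_lebesgue_integral lborel {0..t} (\<lambda>r. UY SB U BH \<omega> t r (F r (y r))))"

end

theory Submission
  imports Defs
begin

text \<open>
  For a fixed sample path the equation is a deterministic Volterra equation with kernel
  \<open>K(t,r) = S\<^sub>B(B\<^sup>H\<^sub>t - B\<^sup>H\<^sub>r) U(t-r,0)\<close>. Continuity of the path and strong continuity of \<open>S\<^sub>B\<close>
  and \<open>U\<close> make \<open>K\<close> strongly continuous on the compact triangle \<open>0 \<le> r \<le> t \<le> T\<close>, hence uniformly
  bounded by the uniform boundedness principle. If \<open>h > 0\<close> is so small that the Lipschitz function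
  has small integral over every interval of length \<open>h\<close>, the weight \<open>\<rho>(t) = 2\<^bsup>t/h\<^esup>\<close> absorbs it:
  in the norm \<open>sup\<^sub>t |y(t)|/\<rho>(t)\<close> the solution map is a contraction of ratio \<open>1/2\<close>, and Banach's
  fixed point theorem gives a unique continuous solution. This works for every path; besides the
  continuity of the paths of \<open>B\<^sup>H\<close> only the strong continuity of \<open>S\<^sub>B\<close> and \<open>U\<close> is used, the
  remaining hypotheses serving in the paper to construct \<open>U\<close>.
\<close>

section \<open>Families of bounded linear operators\<close>

lemma Baire_closed_cover:
  fixes E :: "nat \<Rightarrow> 'a::banach set"
  assumes "\<And>n. closed (E n)" and "(\<Union>n. E n) = UNIV"
  obtains n where "interior (E n) \<noteq> {}"
proof -
  have "\<not> (\<forall>n. interior (E n) = {})"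
  proof
    assume "\<forall>n. interior (E n) = {}"
    then have "euclidean interior_of \<Union>(range E) = {}"
      by (intro Baire_category_alt)
        (use assms(1) completely_metrizable_space_euclidean closed_closedin in auto)
    then show False using assms(2) by simp
  qed
  then show ?thesis using that by blast
qed

lemma bounded_linear_norm_le_of_ball:
  fixes f :: "'a::real_normed_vector \<Rightarrow> 'b::real_normed_vector"
  assumes "bounded_linear f" and "0 < r" and "\<And>z. z \<in> ball z0 r \<Longrightarrow> norm (f z) \<le> n"
  shows "norm (f z) \<le> 4 * n / r * norm z"
proof (cases "z = 0")
  case True
  then show ?thesis using assms(1) by (simp add: linear_simps)
next
  case False
  interpret bounded_linear f by fact
  define c where "c = r / (2 * norm z)"
  have c: "0 < c" using False assms(2) by (simp add: c_def)
  have "z0 + c *\<^sub>R z \<in> ball z0 r" using False assms(2) by (simp add: c_def dist_norm)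
  then have "norm (f (z0 + c *\<^sub>R z)) \<le> n" and "norm (f z0) \<le> n"
    using assms(2,3) by auto
  then have "norm (f (z0 + c *\<^sub>R z) - f z0) \<le> n + n"
    using norm_triangle_ineq4[of "f (z0 + c *\<^sub>R z)" "f z0"] by linarith
  moreover have "f (z0 + c *\<^sub>R z) - f z0 = c *\<^sub>R f z" by (simp add: add scaleR)
  ultimately have "c * norm (f z) \<le> 2 * n" using c by simp
  then show ?thesis using c False assms(2) by (simp add: c_def field_simps)
qed

theorem uniform_boundedness:
  fixes f :: "'i \<Rightarrow> 'a::banach \<Rightarrow> 'b::real_normed_vector"
  assumes lin: "\<And>i. i \<in> I \<Longrightarrow> bounded_linear (f i)"
    and pointwise: "\<And>z. \<exists>B. \<forall>i\<in>I. norm (f i z) \<le> B"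
  shows "\<exists>C\<ge>0. \<forall>i\<in>I. \<forall>z. norm (f i z) \<le> C * norm z"
proof -
  define E where "E n = (\<Inter>i\<in>I. {z. norm (f i z) \<le> real n})" for n :: nat
  have "closed {z. norm (f i z) \<le> real n}" if "i \<in> I" for i n
    using lin[OF that] by (intro closed_Collect_le continuous_intros)
      (auto intro: linear_continuous_on bounded_linear.linear)
  then have "closed (E n)" for n unfolding E_def by (simp add: closed_INT)
  moreover have "(\<Union>n. E n) = UNIV"
  proof -
    have "z \<in> (\<Union>n. E n)" for z
    proof -
      obtain B where "\<forall>i\<in>I. norm (f i z) \<le> B" using pointwise by blast
      moreover obtain n where "B \<le> real n" using real_arch_simple by blast
      ultimately have "z \<in> E n" by (auto simp: E_def intro: order_trans)
      then show ?thesis by blast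
    qed
    then show ?thesis by blast
  qed
  ultimately obtain n where "interior (E n) \<noteq> {}" by (rule Baire_closed_cover)
  then obtain z0 where "z0 \<in> interior (E n)" by blast
  then obtain r where "0 < r" "ball z0 r \<subseteq> E n"
    by (meson interior_subset open_contains_ball open_interior subset_trans)
  then have "norm (f i z) \<le> 4 * real n / r * norm z" if "i \<in> I" for i z
    by (intro bounded_linear_norm_le_of_ball[OF lin[OF that]]) (use that in \<open>auto simp: E_def\<close>)
  then show ?thesis using \<open>0 < r\<close> by (intro exI[of _ "4 * real n / r"]) auto
qed

lemma strongly_continuous_uniform_bound:
  fixes f :: "'p::metric_space \<Rightarrow> 'a::banach \<Rightarrow> 'b::real_normed_vector"
  assumes "compact S" and "\<And>p. p \<in> S \<Longrightarrow> bounded_linear (f p)"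
    and "\<And>z. continuous_on S (\<lambda>p. f p z)"
  obtains C where "0 \<le> C" "\<And>p z. p \<in> S \<Longrightarrow> norm (f p z) \<le> C * norm z"
proof -
  have "\<exists>B. \<forall>p\<in>S. norm (f p z) \<le> B" for z
    using continuous_on_compact_bound[OF assms(1) assms(3)] by metis
  from uniform_boundedness[OF assms(2) this] show ?thesis using that by blast
qed

lemma continuous_on_bounded_linear_family:
  fixes f :: "'p::metric_space \<Rightarrow> 'a::real_normed_vector \<Rightarrow> 'b::real_normed_vector"
  assumes lin: "\<And>p. p \<in> S \<Longrightarrow> bounded_linear (f p)"
    and bound: "\<And>p z. p \<in> S \<Longrightarrow> norm (f p z) \<le> C * norm z"
    and cont: "\<And>z. continuous_on S (\<lambda>p. f p z)"
  shows "continuous_on (S \<times> UNIV) (\<lambda>q. f (fst q) (snd q))"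
  unfolding continuous_on_def
proof (intro ballI)
  fix q0 :: "'p \<times> 'a" assume "q0 \<in> S \<times> UNIV"
  then obtain p z where q0: "q0 = (p, z)" and p: "p \<in> S" by auto
  let ?F = "at (p, z) within S \<times> UNIV"
  have "((\<lambda>q. f (fst q) z) \<longlongrightarrow> f p z) ?F"
    using continuous_on_compose2[OF cont[of z] continuous_on_fst, of "S \<times> UNIV"] p
    unfolding continuous_on_def by fastforce
  moreover have "((\<lambda>q. f (fst q) (snd q - z)) \<longlongrightarrow> 0) ?F"
  proof (rule tendsto_0_le[where K = C])
    show "((\<lambda>q. snd q - z) \<longlongrightarrow> 0) ?F" by (intro tendsto_eq_intros) auto
    show "\<forall>\<^sub>F q in ?F. norm (f (fst q) (snd q - z)) \<le> norm (snd q - z) * C"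
      using bound by (auto simp: eventually_at_filter mult.commute mem_Times_iff)
  qed
  moreover have "\<forall>\<^sub>F q in ?F. f (fst q) (snd q - z) + f (fst q) z = f (fst q) (snd q)"
    using lin by (auto simp: eventually_at_filter linear_simps mem_Times_iff)
  ultimately have "((\<lambda>q. f (fst q) (snd q)) \<longlongrightarrow> f p z) ?F"
    using Lim_transform_eventually tendsto_add[where a = 0] by fastforce
  then show "((\<lambda>q. f (fst q) (snd q)) \<longlongrightarrow> f (fst q0) (snd q0)) (at q0 within S \<times> UNIV)"
    by (simp add: q0)
qed

lemma compact_triangle: "compact {(t, s). 0 \<le> s \<and> s \<le> t \<and> t \<le> (T::real)}"
proof -
  have "{(t, s). 0 \<le> s \<and> s \<le> t \<and> t \<le> T} = {p. 0 \<le> snd p} \<inter> {p. snd p \<le> fst p} \<inter> {p. fst p \<le> T}"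
    by auto
  also have "closed \<dots>" by (intro closed_Int closed_Collect_le continuous_intros)
  finally have "closed {(t, s). 0 \<le> s \<and> s \<le> t \<and> t \<le> (T::real)}" .
  moreover have "{(t, s). 0 \<le> s \<and> s \<le> t \<and> t \<le> (T::real)} \<subseteq> cbox (0, 0) (T, T)"
    by (auto simp: cbox_Pair_eq)
  ultimately show ?thesis
    by (meson bounded_cbox bounded_subset compact_eq_bounded_closed)
qed

section \<open>Integrals over intervals and exponential weights\<close>

lemma tendsto_indicator_Icc_scaleR:
  fixes G :: "real \<Rightarrow> real \<Rightarrow> 'b::real_normed_vector"
  assumes lim: "u \<longlonglongrightarrow> a" and "r \<noteq> a"
    and cont: "0 \<le> r \<Longrightarrow> r < a \<Longrightarrow> (\<lambda>n. G (u n) r) \<longlonglongrightarrow> G a r"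
  shows "(\<lambda>n. indicator {0..u n} r *\<^sub>R G (u n) r) \<longlonglongrightarrow> indicator {0..a} r *\<^sub>R G a r"
proof -
  consider "r < 0" | "0 \<le> r" "r < a" | "a < r" using \<open>r \<noteq> a\<close> by linarith
  then show ?thesis
  proof cases
    case 2
    have "\<forall>\<^sub>F n in sequentially. G (u n) r = indicator {0..u n} r *\<^sub>R G (u n) r"
      using order_tendstoD(1)[OF lim \<open>r < a\<close>] by eventually_elim (use 2 in \<open>auto simp: indicator_def\<close>)
    with cont[OF 2] have "(\<lambda>n. indicator {0..u n} r *\<^sub>R G (u n) r) \<longlonglongrightarrow> G a r"
      by (rule Lim_transform_eventually)
    then show ?thesis using 2 by (simp add: indicator_def)
  next
    case 3
    have "\<forall>\<^sub>F n in sequentially. 0 = indicator {0..u n} r *\<^sub>R G (u n) r"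
      using order_tendstoD(2)[OF lim \<open>a < r\<close>] by eventually_elim (auto simp: indicator_def)
    then have "(\<lambda>n. indicator {0..u n} r *\<^sub>R G (u n) r) \<longlonglongrightarrow> 0"
      by (rule Lim_transform_eventually[OF tendsto_const])
    then show ?thesis using 3 by (simp add: indicator_def)
  qed (simp add: indicator_def)
qed

lemma continuous_on_parametric_set_integral:
  fixes G :: "real \<Rightarrow> real \<Rightarrow> 'b::{banach, second_countable_topology}"
  assumes meas: "\<And>t. t \<in> {0..T} \<Longrightarrow> set_borel_measurable lborel {0..t} (G t)"
    and w: "integrable lborel w" and w_nonneg: "\<And>r. 0 \<le> w r"
    and bound: "\<And>t r. t \<in> {0..T} \<Longrightarrow> r \<in> {0..t} \<Longrightarrow> norm (G t r) \<le> w r"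
    and cont: "\<And>t r. 0 \<le> r \<Longrightarrow> r < t \<Longrightarrow> t \<le> T \<Longrightarrow> continuous (at t within {0..T}) (\<lambda>s. G s r)"
  shows "continuous_on {0..T} (\<lambda>t. set_lebesgue_integral lborel {0..t} (G t))"
proof (rule continuous_on_sequentiallyI)
  fix u a assume u: "\<forall>n. u n \<in> {0..T}" and a: "a \<in> {0..T}" and lim: "u \<longlonglongrightarrow> a"
  have "AE r in lborel. r \<noteq> a" by (rule AE_lborel_singleton)
  then have lim_ae: "AE r in lborel. (\<lambda>n. indicator {0..u n} r *\<^sub>R G (u n) r) \<longlonglongrightarrow> indicator {0..a} r *\<^sub>R G a r"
  proof eventually_elim
    case (elim r)
    show ?case
    proof (rule tendsto_indicator_Icc_scaleR[OF lim elim])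
      assume "0 \<le> r" "r < a"
      then show "(\<lambda>n. G (u n) r) \<longlonglongrightarrow> G a r"
        using cont[of r a] a u lim unfolding continuous_within_sequentially by (auto simp: o_def)
    qed
  qed
  show "(\<lambda>n. set_lebesgue_integral lborel {0..u n} (G (u n))) \<longlonglongrightarrow> set_lebesgue_integral lborel {0..a} (G a)"
    unfolding set_lebesgue_integral_def
  proof (rule integral_dominated_convergence[OF _ _ w lim_ae])
    show "(\<lambda>r. indicator {0..a} r *\<^sub>R G a r) \<in> borel_measurable lborel"
      using meas a by (simp add: set_borel_measurable_def)
    show "(\<lambda>r. indicator {0..u n} r *\<^sub>R G (u n) r) \<in> borel_measurable lborel" for n
      using meas u by (simp add: set_borel_measurable_def)
    show "AE r in lborel. norm (indicator {0..u n} r *\<^sub>R G (u n) r) \<le> w r" for n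
      using bound u w_nonneg by (intro AE_I2) (auto simp: indicator_def)
  qed
qed

lemma set_integrable_mult_bounded:
  fixes f g :: "'a \<Rightarrow> real"
  assumes f: "set_integrable M A f" and g: "g \<in> borel_measurable M"
    and A: "A \<in> sets M" and bound: "\<And>x. x \<in> A \<Longrightarrow> \<bar>g x\<bar> \<le> B"
  shows "set_integrable M A (\<lambda>x. f x * g x)"
proof (rule set_integrable_bound[where f = "\<lambda>x. B * f x"])
  show "set_integrable M A (\<lambda>x. B * f x)" using f by simp
  have "(\<lambda>x. indicator A x *\<^sub>R f x) \<in> borel_measurable M"
    using f unfolding set_integrable_def by (rule borel_measurable_integrable)
  then have "(\<lambda>x. (indicator A x *\<^sub>R f x) * g x) \<in> borel_measurable M"
    using g by (rule borel_measurable_times)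
  then show "set_borel_measurable M A (\<lambda>x. f x * g x)"
    unfolding set_borel_measurable_def by (simp add: mult.assoc)
  have "\<bar>f x\<bar> * \<bar>g x\<bar> \<le> \<bar>f x\<bar> * \<bar>B\<bar>" if "x \<in> A" for x
    using bound[OF that] by (intro mult_left_mono) auto
  then show "AE x in M. x \<in> A \<longrightarrow> norm (f x * g x) \<le> norm (B * f x)"
    by (auto simp: abs_mult mult.commute)
qed

lemma set_integral_Icc_split:
  fixes f :: "real \<Rightarrow> 'a::{banach, second_countable_topology}"
  assumes f: "set_integrable lborel {a..c} f" and "a \<le> b" "b \<le> c"
  shows "set_lebesgue_integral lborel {a..c} f
    = set_lebesgue_integral lborel {a..b} f + set_lebesgue_integral lborel {b..c} f"
proof -
  have int: "set_integrable lborel A f" if "A \<in> sets lborel" "A \<subseteq> {a..c}" for A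
    by (rule set_integrable_subset[OF f that])
  have "{a..c} = {a..b} \<union> {b<..c}" using assms(2,3) by auto
  then have "set_lebesgue_integral lborel {a..c} f
      = set_lebesgue_integral lborel {a..b} f + set_lebesgue_integral lborel {b<..c} f"
    by (simp only:) (intro set_integral_Un int; auto)
  also have "set_lebesgue_integral lborel {b<..c} f = set_lebesgue_integral lborel {b..c} f"
  proof (rule set_integral_cong_set)
    have "set_integrable lborel {b..c} f" "set_integrable lborel {b<..c} f"
      using assms(2) by (auto intro!: int)
    then show "set_borel_measurable lborel {b..c} f" "set_borel_measurable lborel {b<..c} f"
      by (auto simp: set_integrable_def set_borel_measurable_def borel_measurable_integrable)
    show "AE x in lborel. x \<in> {b..c} \<longleftrightarrow> x \<in> {b<..c}"
      using AE_lborel_singleton[of b] by eventually_elim auto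
  qed
  finally show ?thesis .
qed

lemma set_integral_Icc_small:
  fixes L :: "real \<Rightarrow> real"
  assumes L: "set_integrable lborel {0..T} L" and nonneg: "\<And>r. 0 \<le> L r" and "0 < d"
  obtains h where "0 < h" "\<And>s t. 0 \<le> s \<Longrightarrow> s \<le> t \<Longrightarrow> t \<le> T \<Longrightarrow> t - s \<le> h \<Longrightarrow>
      set_lebesgue_integral lborel {s..t} L \<le> d"
proof -
  define \<Lambda> where "\<Lambda> t = set_lebesgue_integral lborel {0..t} L" for t
  have int: "set_integrable lborel {a..b} L" if "0 \<le> a" "b \<le> T" for a b
    using set_integrable_subset[OF L] that by auto
  have "continuous_on {0..T} \<Lambda>"
    unfolding \<Lambda>_def
  proof (rule continuous_on_parametric_set_integral[where w = "\<lambda>r. indicator {0..T} r * L r"])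
    show "set_borel_measurable lborel {0..t} L" if "t \<in> {0..T}" for t
      using int[of 0 t] that by (auto simp: set_integrable_def set_borel_measurable_def)
    show "integrable lborel (\<lambda>r. indicator {0..T} r * L r)" using L by (simp add: set_integrable_def)
  qed (use nonneg in \<open>auto simp: indicator_def\<close>)
  then have "uniformly_continuous_on {0..T} \<Lambda>" by (simp add: compact_uniformly_continuous)
  then obtain e where e: "0 < e" "\<And>a b. a \<in> {0..T} \<Longrightarrow> b \<in> {0..T} \<Longrightarrow> dist b a < e \<Longrightarrow> dist (\<Lambda> b) (\<Lambda> a) < d"
    unfolding uniformly_continuous_on_def using \<open>0 < d\<close> by metis
  have diff: "set_lebesgue_integral lborel {s..t} L = \<Lambda> t - \<Lambda> s" if "0 \<le> s" "s \<le> t" "t \<le> T" for s t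
    unfolding \<Lambda>_def using set_integral_Icc_split[OF int[of 0 t]] that by simp
  show ?thesis
  proof (rule that[of "e / 2"])
    fix s t assume st: "0 \<le> s" "s \<le> t" "t \<le> T" "t - s \<le> e / 2"
    have "dist (\<Lambda> t) (\<Lambda> s) < d" using st e(1) by (intro e(2)) (auto simp: dist_real_def)
    then show "set_lebesgue_integral lborel {s..t} L \<le> d"
      using diff[OF st(1-3)] by (simp add: dist_real_def)
  qed (use e in auto)
qed

text \<open>Unrolling the step bounds \<open>\<Lambda> t\<close> by the geometric series \<open>d \<rho>(t) \<Sum>\<^sub>k 2\<^sup>-\<^sup>k\<close>.\<close>

lemma doubling_recursion_bound:
  fixes \<Lambda> \<rho> :: "real \<Rightarrow> real"
  assumes h: "0 < h" and "0 \<le> d" and \<rho>_pos: "\<And>t. 0 < \<rho> t" and \<rho>_shift: "\<And>t. \<rho> (t - h) = \<rho> t / 2"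
    and base: "\<And>t. t \<in> {0..T} \<Longrightarrow> t \<le> h \<Longrightarrow> \<Lambda> t \<le> d * \<rho> t"
    and step: "\<And>t. t \<in> {0..T} \<Longrightarrow> h \<le> t \<Longrightarrow> \<Lambda> t \<le> \<Lambda> (t - h) + d * \<rho> t"
    and t: "t \<in> {0..T}"
  shows "\<Lambda> t \<le> 2 * d * \<rho> t"
proof -
  have "\<forall>t\<in>{0..T}. t < real (Suc n) * h \<longrightarrow> \<Lambda> t \<le> 2 * d * \<rho> t" for n
  proof (induction n)
    case 0
    show ?case
    proof (intro ballI impI)
      fix t assume "t \<in> {0..T}" "t < real (Suc 0) * h"
      then have "\<Lambda> t \<le> d * \<rho> t" by (intro base) auto
      also have "\<dots> \<le> 2 * d * \<rho> t" using \<open>0 \<le> d\<close> \<rho>_pos[of t] by simp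
      finally show "\<Lambda> t \<le> 2 * d * \<rho> t" .
    qed
  next
    case (Suc n)
    show ?case
    proof (intro ballI impI)
      fix t assume t: "t \<in> {0..T}" "t < real (Suc (Suc n)) * h"
      show "\<Lambda> t \<le> 2 * d * \<rho> t"
      proof (cases "t < real (Suc n) * h")
        case True
        then show ?thesis using Suc.IH t(1) by blast
      next
        case False
        moreover have "h \<le> real (Suc n) * h" using h by (simp add: algebra_simps)
        ultimately have "h \<le> t" by linarith
        have "t - h \<in> {0..T}" "t - h < real (Suc n) * h" using t \<open>h \<le> t\<close> h by (auto simp: algebra_simps)
        then have "\<Lambda> (t - h) \<le> 2 * d * \<rho> (t - h)" using Suc.IH by blast
        then have "\<Lambda> t \<le> 2 * d * \<rho> (t - h) + d * \<rho> t" using step[OF t(1) \<open>h \<le> t\<close>] by linarith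
        then show ?thesis by (simp add: \<rho>_shift)
      qed
    qed
  qed
  moreover obtain n where "t / h < real n" using reals_Archimedean2 by blast
  then have "t < real (Suc n) * h" using h by (simp add: divide_less_eq algebra_simps)
  ultimately show ?thesis using t by blast
qed

lemma set_integral_doubling_weight:
  fixes L :: "real \<Rightarrow> real"
  assumes L: "set_integrable lborel {0..T} L" and nonneg: "\<And>r. 0 \<le> L r"
    and "0 \<le> d" and h: "0 < h"
    and small: "\<And>s t. 0 \<le> s \<Longrightarrow> s \<le> t \<Longrightarrow> t \<le> T \<Longrightarrow> t - s \<le> h \<Longrightarrow>
      set_lebesgue_integral lborel {s..t} L \<le> d"
    and t: "t \<in> {0..T}"
  shows "set_lebesgue_integral lborel {0..t} (\<lambda>r. L r * 2 powr (r / h)) \<le> 2 * d * 2 powr (t / h)"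
proof -
  define \<rho> where "\<rho> r = (2::real) powr (r / h)" for r
  have \<rho>_mono: "\<rho> r \<le> \<rho> s" if "r \<le> s" for r s
    unfolding \<rho>_def using that h by (intro powr_mono divide_right_mono) auto
  have \<rho>_pos: "0 < \<rho> r" for r by (simp add: \<rho>_def)
  have int: "set_integrable lborel {a..b} (\<lambda>r. L r * \<rho> r)" if "0 \<le> a" "b \<le> T" for a b
    using set_integrable_subset[OF L, of "{a..b}"] that \<rho>_mono \<rho>_pos h
    by (intro set_integrable_mult_bounded[where B = "\<rho> T"]) (auto simp: \<rho>_def less_imp_le)
  have short: "set_lebesgue_integral lborel {s..t} (\<lambda>r. L r * \<rho> r) \<le> d * \<rho> t"
    if "0 \<le> s" "s \<le> t" "t \<le> T" "t - s \<le> h" for s t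
  proof -
    have "set_lebesgue_integral lborel {s..t} (\<lambda>r. L r * \<rho> r) \<le> set_lebesgue_integral lborel {s..t} (\<lambda>r. L r * \<rho> t)"
      using int[of s t] set_integrable_subset[OF L, of "{s..t}"] that nonneg \<rho>_mono
      by (intro set_integral_mono) (auto intro!: mult_left_mono)
    also have "\<dots> \<le> d * \<rho> t"
      using small[OF that] \<rho>_pos[of t] by (simp add: mult_right_mono)
    finally show ?thesis .
  qed
  show ?thesis
    unfolding \<rho>_def[symmetric]
  proof (rule doubling_recursion_bound[OF h \<open>0 \<le> d\<close> \<rho>_pos _ _ _ t])
    show "\<rho> (t - h) = \<rho> t / 2" for t
      using h by (simp add: \<rho>_def powr_diff diff_divide_distrib)
    show "set_lebesgue_integral lborel {0..t} (\<lambda>r. L r * \<rho> r) \<le> d * \<rho> t"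
      if "t \<in> {0..T}" "t \<le> h" for t
      using that by (intro short) auto
    show "set_lebesgue_integral lborel {0..t} (\<lambda>r. L r * \<rho> r)
        \<le> set_lebesgue_integral lborel {0..t - h} (\<lambda>r. L r * \<rho> r) + d * \<rho> t"
      if "t \<in> {0..T}" "h \<le> t" for t
      using set_integral_Icc_split[OF int[of 0 t], of "t - h"] short[of "t - h" t] that h by auto
  qed
qed

lemma exists_absorbing_weight:
  fixes L :: "real \<Rightarrow> real"
  assumes L: "set_integrable lborel {0..T} L" and nonneg: "\<And>r. 0 \<le> L r" and "0 < \<epsilon>"
  obtains \<rho> :: "real \<Rightarrow> real" where "continuous_on UNIV \<rho>" "\<And>r. 0 < \<rho> r" "mono \<rho>"
    "\<And>t. t \<in> {0..T} \<Longrightarrow> set_lebesgue_integral lborel {0..t} (\<lambda>r. L r * \<rho> r) \<le> \<epsilon> * \<rho> t"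
proof -
  obtain h where h: "0 < h" "\<And>s t. 0 \<le> s \<Longrightarrow> s \<le> t \<Longrightarrow> t \<le> T \<Longrightarrow> t - s \<le> h \<Longrightarrow>
      set_lebesgue_integral lborel {s..t} L \<le> \<epsilon> / 2"
    using set_integral_Icc_small[OF L nonneg half_gt_zero[OF \<open>0 < \<epsilon>\<close>]] by blast
  show ?thesis
  proof (rule that[of "\<lambda>r. 2 powr (r / h)"])
    show "continuous_on UNIV (\<lambda>r. 2 powr (r / h))" using h(1) by (intro continuous_intros) auto
    show "mono (\<lambda>r. 2 powr (r / h))"
      using h(1) by (intro monoI powr_mono divide_right_mono) auto
    show "set_lebesgue_integral lborel {0..t} (\<lambda>r. L r * 2 powr (r / h)) \<le> \<epsilon> * 2 powr (t / h)"
      if "t \<in> {0..T}" for t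
      using set_integral_doubling_weight[OF L nonneg _ h that] \<open>0 < \<epsilon>\<close> by simp
  qed simp
qed

section \<open>Contractions on continuous functions on an interval\<close>

lemma apply_Bcontfun_clamp:
  fixes f :: "real \<Rightarrow> 'a::real_normed_vector"
  assumes "continuous_on {0..T} f" and "0 \<le> T"
  shows "apply_bcontfun (Bcontfun (\<lambda>t. f (max 0 (min T t)))) = (\<lambda>t. f (max 0 (min T t)))"
proof -
  have "continuous_on UNIV (\<lambda>t. f (max 0 (min T t)))"
    by (rule continuous_on_compose2[OF assms(1)]) (use assms(2) in \<open>auto intro!: continuous_intros\<close>)
  moreover obtain B where "\<And>t. t \<in> {0..T} \<Longrightarrow> norm (f t) \<le> B"
    using continuous_on_compact_bound[OF compact_Icc assms(1)] by blast
  ultimately have "(\<lambda>t. f (max 0 (min T t))) \<in> bcontfun"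
    using assms(2) by (intro bcontfun_normI[where b = B]) auto
  then show ?thesis by (simp add: Bcontfun_inverse)
qed

text \<open>Extending functions constantly outside \<open>[0,T]\<close> embeds \<open>C([0,T])\<close> isometrically into the
  complete space \<open>real \<Rightarrow>\<^sub>C 'a\<close>, where the Banach fixed point theorem applies.\<close>

lemma contraction_fixed_point_Icc:
  fixes \<Phi> :: "(real \<Rightarrow> 'a::banach) \<Rightarrow> real \<Rightarrow> 'a"
  assumes T: "0 \<le> T" and q: "0 \<le> q" "q < 1"
    and cont: "\<And>y. continuous_on {0..T} y \<Longrightarrow> continuous_on {0..T} (\<Phi> y)"
    and contraction: "\<And>y1 y2 D t. continuous_on {0..T} y1 \<Longrightarrow> continuous_on {0..T} y2 \<Longrightarrow>
        (\<And>r. r \<in> {0..T} \<Longrightarrow> norm (y1 r - y2 r) \<le> D) \<Longrightarrow> t \<in> {0..T} \<Longrightarrow>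
        norm (\<Phi> y1 t - \<Phi> y2 t) \<le> q * D"
  shows "\<exists>y. continuous_on {0..T} y \<and> (\<forall>t\<in>{0..T}. \<Phi> y t = y t) \<and>
           (\<forall>z. continuous_on {0..T} z \<and> (\<forall>t\<in>{0..T}. \<Phi> z t = z t) \<longrightarrow> (\<forall>t\<in>{0..T}. z t = y t))"
proof -
  define c where "c t = max 0 (min T t)" for t
  have c: "c t \<in> {0..T}" "t \<in> {0..T} \<Longrightarrow> c t = t" for t using T by (auto simp: c_def)
  define \<Psi> where "\<Psi> g = Bcontfun (\<lambda>t. \<Phi> (apply_bcontfun g) (c t))" for g :: "real \<Rightarrow>\<^sub>C 'a"
  have \<Psi>: "apply_bcontfun (\<Psi> g) t = \<Phi> (apply_bcontfun g) (c t)" for g t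
    unfolding \<Psi>_def c_def by (subst apply_Bcontfun_clamp[OF cont T]) auto
  have "dist (\<Psi> g1) (\<Psi> g2) \<le> q * dist g1 g2" for g1 g2
  proof (rule dist_bound)
    fix t
    have "norm (g1 r - g2 r) \<le> dist g1 g2" for r using dist_bounded[of g1 r g2] by (simp add: dist_norm)
    then show "dist (\<Psi> g1 t) (\<Psi> g2 t) \<le> q * dist g1 g2"
      unfolding \<Psi> dist_norm using c by (intro contraction) auto
  qed
  then obtain g0 where g0: "\<Psi> g0 = g0" and unique: "\<And>g. \<Psi> g = g \<Longrightarrow> g = g0"
    using banach_fix_type[OF q] by metis
  show ?thesis
  proof (intro exI[of _ "apply_bcontfun g0"] conjI allI impI ballI)
    fix t assume "t \<in> {0..T}"
    then show "\<Phi> g0 t = g0 t" using \<Psi>[of g0 t] g0 c(2) by simp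
  next
    fix z t assume z: "continuous_on {0..T} z \<and> (\<forall>t\<in>{0..T}. \<Phi> z t = z t)" and t: "t \<in> {0..T}"
    define gz where "gz = Bcontfun (\<lambda>t. z (c t))"
    have gz: "apply_bcontfun gz t = z (c t)" for t
      unfolding gz_def c_def using apply_Bcontfun_clamp[of T z] z T by simp
    have "norm (\<Phi> gz s - \<Phi> z s) \<le> q * 0" if "s \<in> {0..T}" for s
      by (intro contraction[OF continuous_on_apply_bcontfun]) (use z that in \<open>auto simp: gz c\<close>)
    then have "\<Psi> gz = gz" by (intro bcontfun_eqI) (use z c in \<open>auto simp: \<Psi> gz\<close>)
    then show "z t = g0 t" using unique gz[of t] c(2)[OF t] by simp
  qed simp
qed

lemma weighted_contraction_rescale:
  fixes \<Phi> :: "(real \<Rightarrow> 'a::real_normed_vector) \<Rightarrow> real \<Rightarrow> 'a" and \<rho> :: "real \<Rightarrow> real"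
  assumes \<rho>: "continuous_on {0..T} \<rho>" "\<And>t. t \<in> {0..T} \<Longrightarrow> 0 < \<rho> t"
    and cont: "\<And>y. continuous_on {0..T} y \<Longrightarrow> continuous_on {0..T} (\<Phi> y)"
    and contraction: "\<And>y1 y2 D t. continuous_on {0..T} y1 \<Longrightarrow> continuous_on {0..T} y2 \<Longrightarrow>
        (\<And>r. r \<in> {0..T} \<Longrightarrow> norm (y1 r - y2 r) \<le> D * \<rho> r) \<Longrightarrow> t \<in> {0..T} \<Longrightarrow>
        norm (\<Phi> y1 t - \<Phi> y2 t) \<le> q * D * \<rho> t"
  shows "continuous_on {0..T} y \<Longrightarrow> continuous_on {0..T} (\<lambda>t. (1 / \<rho> t) *\<^sub>R \<Phi> (\<lambda>r. \<rho> r *\<^sub>R y r) t)"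
    and "continuous_on {0..T} y1 \<Longrightarrow> continuous_on {0..T} y2 \<Longrightarrow>
      (\<And>r. r \<in> {0..T} \<Longrightarrow> norm (y1 r - y2 r) \<le> D) \<Longrightarrow> t \<in> {0..T} \<Longrightarrow>
      norm ((1 / \<rho> t) *\<^sub>R \<Phi> (\<lambda>r. \<rho> r *\<^sub>R y1 r) t - (1 / \<rho> t) *\<^sub>R \<Phi> (\<lambda>r. \<rho> r *\<^sub>R y2 r) t) \<le> q * D"
proof -
  have \<rho>_ne: "t \<in> {0..T} \<Longrightarrow> \<rho> t \<noteq> 0" for t using \<rho>(2) by force
  show "continuous_on {0..T} (\<lambda>t. (1 / \<rho> t) *\<^sub>R \<Phi> (\<lambda>r. \<rho> r *\<^sub>R y r) t)" if "continuous_on {0..T} y"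
  proof -
    have "continuous_on {0..T} (\<Phi> (\<lambda>r. \<rho> r *\<^sub>R y r))" by (intro cont continuous_on_scaleR \<rho>(1) that)
    then show ?thesis
      using \<rho>_ne by (intro continuous_on_scaleR continuous_on_divide continuous_on_const \<rho>(1)) auto
  qed
  assume y: "continuous_on {0..T} y1" "continuous_on {0..T} y2"
    and D: "\<And>r. r \<in> {0..T} \<Longrightarrow> norm (y1 r - y2 r) \<le> D" and t: "t \<in> {0..T}"
  have "norm (\<Phi> (\<lambda>r. \<rho> r *\<^sub>R y1 r) t - \<Phi> (\<lambda>r. \<rho> r *\<^sub>R y2 r) t) \<le> q * D * \<rho> t"
  proof (rule contraction[OF _ _ _ t])
    show "continuous_on {0..T} (\<lambda>r. \<rho> r *\<^sub>R y1 r)" "continuous_on {0..T} (\<lambda>r. \<rho> r *\<^sub>R y2 r)"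
      by (intro continuous_on_scaleR \<rho>(1) y)+
    fix r assume "r \<in> {0..T}"
    then show "norm (\<rho> r *\<^sub>R y1 r - \<rho> r *\<^sub>R y2 r) \<le> D * \<rho> r"
      using D[of r] \<rho>(2)[of r] by (simp add: scaleR_diff_right[symmetric] mult.commute mult_left_mono)
  qed
  then show "norm ((1 / \<rho> t) *\<^sub>R \<Phi> (\<lambda>r. \<rho> r *\<^sub>R y1 r) t - (1 / \<rho> t) *\<^sub>R \<Phi> (\<lambda>r. \<rho> r *\<^sub>R y2 r) t) \<le> q * D"
    using \<rho>(2)[OF t] by (simp add: scaleR_diff_right[symmetric] divide_le_eq)
qed

lemma weighted_contraction_fixed_point_Icc:
  fixes \<Phi> :: "(real \<Rightarrow> 'a::banach) \<Rightarrow> real \<Rightarrow> 'a" and \<rho> :: "real \<Rightarrow> real"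
  assumes T: "0 \<le> T" and q: "0 \<le> q" "q < 1"
    and \<rho>: "continuous_on {0..T} \<rho>" "\<And>t. t \<in> {0..T} \<Longrightarrow> 0 < \<rho> t"
    and cont: "\<And>y. continuous_on {0..T} y \<Longrightarrow> continuous_on {0..T} (\<Phi> y)"
    and contraction: "\<And>y1 y2 D t. continuous_on {0..T} y1 \<Longrightarrow> continuous_on {0..T} y2 \<Longrightarrow>
        (\<And>r. r \<in> {0..T} \<Longrightarrow> norm (y1 r - y2 r) \<le> D * \<rho> r) \<Longrightarrow> t \<in> {0..T} \<Longrightarrow>
        norm (\<Phi> y1 t - \<Phi> y2 t) \<le> q * D * \<rho> t"
  shows "\<exists>y. continuous_on {0..T} y \<and> (\<forall>t\<in>{0..T}. \<Phi> y t = y t) \<and>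
           (\<forall>z. continuous_on {0..T} z \<and> (\<forall>t\<in>{0..T}. \<Phi> z t = z t) \<longrightarrow> (\<forall>t\<in>{0..T}. z t = y t))"
proof -
  have \<rho>_ne: "t \<in> {0..T} \<Longrightarrow> \<rho> t \<noteq> 0" for t using \<rho>(2) by force
  define \<Phi>' where "\<Phi>' y t = (1 / \<rho> t) *\<^sub>R \<Phi> (\<lambda>r. \<rho> r *\<^sub>R y r) t" for y t
  have "\<exists>y. continuous_on {0..T} y \<and> (\<forall>t\<in>{0..T}. \<Phi>' y t = y t) \<and>
           (\<forall>z. continuous_on {0..T} z \<and> (\<forall>t\<in>{0..T}. \<Phi>' z t = z t) \<longrightarrow> (\<forall>t\<in>{0..T}. z t = y t))"
  proof (rule contraction_fixed_point_Icc[OF T q])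
    show "continuous_on {0..T} (\<Phi>' y)" if "continuous_on {0..T} y" for y
      unfolding \<Phi>'_def by (rule weighted_contraction_rescale(1)[OF \<rho> cont contraction that])
    show "norm (\<Phi>' y1 t - \<Phi>' y2 t) \<le> q * D"
      if "continuous_on {0..T} y1" "continuous_on {0..T} y2"
        "\<And>r. r \<in> {0..T} \<Longrightarrow> norm (y1 r - y2 r) \<le> D" "t \<in> {0..T}" for y1 y2 D t
      unfolding \<Phi>'_def by (rule weighted_contraction_rescale(2)[OF \<rho> cont contraction that])
  qed
  then obtain y where y: "continuous_on {0..T} y" "\<And>t. t \<in> {0..T} \<Longrightarrow> \<Phi>' y t = y t"
    and unique: "\<And>z. continuous_on {0..T} z \<Longrightarrow> (\<And>t. t \<in> {0..T} \<Longrightarrow> \<Phi>' z t = z t) \<Longrightarrow>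
      \<forall>t\<in>{0..T}. z t = y t"
    by blast
  show ?thesis
  proof (intro exI[of _ "\<lambda>r. \<rho> r *\<^sub>R y r"] conjI allI impI ballI)
    show "continuous_on {0..T} (\<lambda>r. \<rho> r *\<^sub>R y r)" by (intro continuous_on_scaleR \<rho>(1) y(1))
    fix t assume t: "t \<in> {0..T}"
    have "\<Phi> (\<lambda>r. \<rho> r *\<^sub>R y r) t = \<rho> t *\<^sub>R ((1 / \<rho> t) *\<^sub>R \<Phi> (\<lambda>r. \<rho> r *\<^sub>R y r) t)"
      using \<rho>_ne[OF t] by simp
    also have "\<dots> = \<rho> t *\<^sub>R y t" using y(2)[OF t] by (simp add: \<Phi>'_def)
    finally show "\<Phi> (\<lambda>r. \<rho> r *\<^sub>R y r) t = \<rho> t *\<^sub>R y t" .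
  next
    fix z t assume z: "continuous_on {0..T} z \<and> (\<forall>t\<in>{0..T}. \<Phi> z t = z t)" and t: "t \<in> {0..T}"
    define z' where "z' r = (1 / \<rho> r) *\<^sub>R z r" for r
    have z'c: "continuous_on {0..T} z'"
      unfolding z'_def using z \<rho>_ne by (intro continuous_on_scaleR continuous_on_divide continuous_on_const \<rho>(1)) auto
    have \<rho>z': "\<rho> r *\<^sub>R z' r = z r" if "r \<in> {0..T}" for r using \<rho>_ne[OF that] by (simp add: z'_def)
    have "norm (\<Phi> (\<lambda>r. \<rho> r *\<^sub>R z' r) s - \<Phi> z s) \<le> q * 0 * \<rho> s" if "s \<in> {0..T}" for s
      by (rule contraction) (use z z'c that \<rho>z' in \<open>auto intro: continuous_on_scaleR \<rho>(1)\<close>)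
    then have "\<Phi>' z' s = z' s" if "s \<in> {0..T}" for s
      using z that by (simp add: \<Phi>'_def z'_def)
    then have "z' t = y t" using unique[OF z'c] t by blast
    then show "z t = \<rho> t *\<^sub>R y t" using \<rho>z'[OF t] by simp
  qed
qed

section \<open>Volterra equations with a strongly continuous kernel\<close>

locale volterra_equation =
  fixes K :: "real \<Rightarrow> real \<Rightarrow> 'v::{banach, second_countable_topology} \<Rightarrow> 'v"
    and F :: "real \<Rightarrow> 'v \<Rightarrow> 'v" and T :: real and L N :: "real \<Rightarrow> real"
  assumes T_nonneg: "0 \<le> T"
    and kernel_linear: "\<And>t r. 0 \<le> r \<Longrightarrow> r \<le> t \<Longrightarrow> t \<le> T \<Longrightarrow> bounded_linear (K t r)"
    and kernel_continuous: "\<And>z. continuous_on {(t, r). 0 \<le> r \<and> r \<le> t \<and> t \<le> T} (\<lambda>(t, r). K t r z)"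
    and F_measurable: "(\<lambda>p. F (fst p) (snd p)) \<in> borel_measurable (restrict_space borel ({0..T} \<times> UNIV))"
    and L_integrable: "set_integrable lborel {0..T} L"
    and F_lipschitz: "\<And>t u v. t \<in> {0..T} \<Longrightarrow> norm (F t u - F t v) \<le> L t * norm (u - v)"
    and N_integrable: "set_integrable lborel {0..T} N"
    and F_zero: "\<And>t. t \<in> {0..T} \<Longrightarrow> norm (F t 0) \<le> N t"
begin

lemma kernel_bound:
  obtains C where "0 \<le> C" "\<And>t r z. 0 \<le> r \<Longrightarrow> r \<le> t \<Longrightarrow> t \<le> T \<Longrightarrow> norm (K t r z) \<le> C * norm z"
proof -
  obtain C where "0 \<le> C"
    and C: "\<And>p z. p \<in> {(t, r). 0 \<le> r \<and> r \<le> t \<and> t \<le> T} \<Longrightarrow> norm (K (fst p) (snd p) z) \<le> C * norm z"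
    by (rule strongly_continuous_uniform_bound[OF compact_triangle, of _ "\<lambda>p. K (fst p) (snd p)"])
      (use kernel_linear kernel_continuous in \<open>auto simp: case_prod_beta\<close>)
  show ?thesis using that[OF \<open>0 \<le> C\<close>] C by force
qed

lemma continuous_on_kernel_comp:
  assumes "continuous_on S g" "g ` S \<subseteq> {(t, r). 0 \<le> r \<and> r \<le> t \<and> t \<le> T}"
  shows "continuous_on S (\<lambda>x. K (fst (g x)) (snd (g x)) z)"
  using continuous_on_compose2[OF kernel_continuous[of z] assms] by (simp add: case_prod_beta)

lemma continuous_on_kernel_second:
  assumes "t \<in> {0..T}"
  shows "continuous_on {0..t} (\<lambda>r. K t r z)"
proof -
  have "continuous_on {0..t} (\<lambda>r. K (fst (t, r)) (snd (t, r)) z)"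
    by (rule continuous_on_kernel_comp[of _ "\<lambda>r. (t, r)"]) (use assms in \<open>auto intro!: continuous_intros\<close>)
  then show ?thesis by simp
qed

lemma continuous_on_kernel_at_zero: "continuous_on {0..T} (\<lambda>t. K t 0 z)"
proof -
  have "continuous_on {0..T} (\<lambda>t. K (fst (t, 0::real)) (snd (t, 0::real)) z)"
    by (rule continuous_on_kernel_comp[of _ "\<lambda>t. (t, 0)"]) (auto intro!: continuous_intros)
  then show ?thesis by simp
qed

lemma continuous_kernel_first:
  assumes "0 \<le> r" "r < t" "t \<le> T"
  shows "continuous (at t within {0..T}) (\<lambda>s. K s r z)"
proof -
  have "continuous_on {r..T} (\<lambda>s. K (fst (s, r)) (snd (s, r)) z)"
    by (rule continuous_on_kernel_comp[of _ "\<lambda>s. (s, r)"]) (use assms in \<open>auto intro!: continuous_intros\<close>)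
  then have "continuous (at t within {r..T}) (\<lambda>s. K s r z)"
    using assms by (simp add: continuous_on_eq_continuous_within)
  moreover have "at t within {0..T} = at t within {r..T}"
    by (rule at_within_nhd[where S = "{r<..}"]) (use assms in auto)
  ultimately show ?thesis by (simp add: continuous_within)
qed

lemma F_growth:
  assumes "t \<in> {0..T}"
  shows "norm (F t u) \<le> N t + \<bar>L t\<bar> * norm u"
proof -
  have "norm (F t u) \<le> norm (F t 0) + norm (F t u - F t 0)" by (rule norm_triangle_sub)
  also have "\<dots> \<le> N t + L t * norm u"
    using F_zero[OF assms] F_lipschitz[OF assms, of u 0] by simp
  also have "\<dots> \<le> N t + \<bar>L t\<bar> * norm u" by (simp add: mult_right_mono)
  finally show ?thesis .
qed

definition kernel_integral :: "(real \<Rightarrow> 'v) \<Rightarrow> real \<Rightarrow> 'v" where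
  "kernel_integral y t = set_lebesgue_integral lborel {0..t} (\<lambda>r. K t r (F r (y r)))"

lemma kernel_integrand_measurable:
  assumes t: "t \<in> {0..T}" and y: "continuous_on {0..T} y"
  shows "set_borel_measurable lborel {0..t} (\<lambda>r. K t r (F r (y r)))"
proof -
  have "(\<lambda>r. (r, y r)) \<in> measurable (restrict_space borel {0..t}) (restrict_space borel ({0..T} \<times> UNIV))"
    using t borel_measurable_continuous_on_restrict[OF continuous_on_Pair[OF continuous_on_id
        continuous_on_subset[OF y]]]
    by (intro measurable_restrict_space2) auto
  from measurable_compose[OF this F_measurable]
  have "(\<lambda>r. F r (y r)) \<in> borel_measurable (restrict_space borel {0..t})" by simp
  from measurable_Pair[OF measurable_restrict_space1[OF measurable_ident_sets[OF refl]] this]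
  have pair: "(\<lambda>r. (r, F r (y r))) \<in> measurable (restrict_space borel {0..t}) (borel :: (real \<times> 'v) measure)"
    by (simp add: borel_prod)
  have inner: "(\<lambda>r. (r, F r (y r))) \<in> measurable (restrict_space borel {0..t}) (restrict_space borel ({0..t} \<times> UNIV))"
    by (rule measurable_restrict_space2[OF _ pair]) (auto simp: space_restrict_space)
  obtain C where "0 \<le> C" "\<And>t r z. 0 \<le> r \<Longrightarrow> r \<le> t \<Longrightarrow> t \<le> T \<Longrightarrow> norm (K t r z) \<le> C * norm z"
    using kernel_bound by blast
  then have "continuous_on ({0..t} \<times> UNIV) (\<lambda>q. K t (fst q) (snd q))"
    using t kernel_linear continuous_on_kernel_second[OF t]
    by (intro continuous_on_bounded_linear_family[where C = C]) auto
  from measurable_compose[OF inner borel_measurable_continuous_on_restrict[OF this]]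
  have "(\<lambda>r. K t r (F r (y r))) \<in> borel_measurable (restrict_space borel {0..t})" by simp
  then show ?thesis
    by (simp add: set_borel_measurable_def borel_measurable_restrict_space_iff)
qed

lemma kernel_integrand_dominated:
  assumes y: "continuous_on {0..T} y"
  obtains w where "integrable lborel w" "\<And>r. 0 \<le> w r"
    "\<And>t r. t \<le> T \<Longrightarrow> r \<in> {0..t} \<Longrightarrow> norm (K t r (F r (y r))) \<le> w r"
proof -
  obtain C where C: "0 \<le> C" "\<And>t r z. 0 \<le> r \<Longrightarrow> r \<le> t \<Longrightarrow> t \<le> T \<Longrightarrow> norm (K t r z) \<le> C * norm z"
    using kernel_bound by blast
  obtain B where B: "0 \<le> B" "\<And>r. r \<in> {0..T} \<Longrightarrow> norm (y r) \<le> B"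
    using continuous_on_compact_bound[OF compact_Icc y] by blast
  show ?thesis
  proof (rule that[of "\<lambda>r. indicator {0..T} r * (C * (N r + \<bar>L r\<bar> * B))"])
    have "set_integrable lborel {0..T} (\<lambda>r. C * (N r + \<bar>L r\<bar> * B))"
      by (intro set_integrable_mult_right set_integral_add(1) set_integrable_mult_left N_integrable
          set_integrable_abs L_integrable)
    then show "integrable lborel (\<lambda>r. indicator {0..T} r * (C * (N r + \<bar>L r\<bar> * B)))"
      by (simp add: set_integrable_def)
    have "0 \<le> N r" if "r \<in> {0..T}" for r using F_zero[OF that] norm_ge_zero order_trans by blast
    then show "0 \<le> indicator {0..T} r * (C * (N r + \<bar>L r\<bar> * B))" for r
      using C(1) B(1) by (simp add: indicator_def)
    fix t r assume "t \<le> T" "r \<in> {0..t}"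
    then have "norm (K t r (F r (y r))) \<le> C * norm (F r (y r))" using C(2) by auto
    also have "\<dots> \<le> C * (N r + \<bar>L r\<bar> * norm (y r))"
      using F_growth[of r "y r"] C(1) \<open>t \<le> T\<close> \<open>r \<in> {0..t}\<close> by (intro mult_left_mono) auto
    also have "\<dots> \<le> C * (N r + \<bar>L r\<bar> * B)"
      using B(2)[of r] \<open>t \<le> T\<close> \<open>r \<in> {0..t}\<close> C(1) by (auto intro!: mult_left_mono mult_right_mono)
    finally show "norm (K t r (F r (y r))) \<le> indicator {0..T} r * (C * (N r + \<bar>L r\<bar> * B))"
      using \<open>t \<le> T\<close> \<open>r \<in> {0..t}\<close> by simp
  qed
qed

lemma set_integrable_kernel_integrand:
  assumes t: "t \<in> {0..T}" and y: "continuous_on {0..T} y"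
  shows "set_integrable lborel {0..t} (\<lambda>r. K t r (F r (y r)))"
proof -
  obtain w where w: "integrable lborel w" "\<And>r. 0 \<le> w r"
    "\<And>t r. t \<le> T \<Longrightarrow> r \<in> {0..t} \<Longrightarrow> norm (K t r (F r (y r))) \<le> w r"
    using kernel_integrand_dominated[OF y] by blast
  show ?thesis
  proof (rule set_integrable_bound[OF _ kernel_integrand_measurable[OF t y]])
    show "set_integrable lborel {0..t} w"
      using integrable_mult_indicator[OF _ w(1), of "{0..t}"] by (simp add: set_integrable_def)
    show "AE r in lborel. r \<in> {0..t} \<longrightarrow> norm (K t r (F r (y r))) \<le> norm (w r)"
      using w(2,3) t by (intro AE_I2) (auto intro: order_trans)
  qed
qed

lemma continuous_on_kernel_integral:
  assumes y: "continuous_on {0..T} y"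
  shows "continuous_on {0..T} (kernel_integral y)"
proof -
  obtain w where w: "integrable lborel w" "\<And>r. 0 \<le> w r"
    "\<And>t r. t \<le> T \<Longrightarrow> r \<in> {0..t} \<Longrightarrow> norm (K t r (F r (y r))) \<le> w r"
    using kernel_integrand_dominated[OF y] by blast
  show ?thesis
    unfolding kernel_integral_def
    by (rule continuous_on_parametric_set_integral[OF kernel_integrand_measurable[OF _ y] w(1,2)])
      (use w(3) continuous_kernel_first in auto)
qed

lemma kernel_integrand_lipschitz:
  assumes C: "\<And>t r z. 0 \<le> r \<Longrightarrow> r \<le> t \<Longrightarrow> t \<le> T \<Longrightarrow> norm (K t r z) \<le> C * norm z" "0 \<le> C"
    and r: "0 \<le> r" "r \<le> s" "s \<le> T"
  shows "norm (K s r (F r u) - K s r (F r v)) \<le> C * \<bar>L r\<bar> * norm (u - v)"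
proof -
  interpret bounded_linear "K s r" using kernel_linear r by auto
  have "norm (K s r (F r u) - K s r (F r v)) = norm (K s r (F r u - F r v))" by (simp add: diff)
  also have "\<dots> \<le> C * norm (F r u - F r v)" using C(1) r by auto
  also have "\<dots> \<le> C * (\<bar>L r\<bar> * norm (u - v))"
  proof (rule mult_left_mono[OF _ C(2)])
    have "norm (F r u - F r v) \<le> L r * norm (u - v)" using F_lipschitz r by auto
    also have "\<dots> \<le> \<bar>L r\<bar> * norm (u - v)" by (simp add: mult_right_mono)
    finally show "norm (F r u - F r v) \<le> \<bar>L r\<bar> * norm (u - v)" .
  qed
  finally show ?thesis by (simp add: mult.assoc)
qed

lemma kernel_integral_lipschitz:
  assumes C: "\<And>t r z. 0 \<le> r \<Longrightarrow> r \<le> t \<Longrightarrow> t \<le> T \<Longrightarrow> norm (K t r z) \<le> C * norm z" "0 \<le> C"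
    and \<phi>: "continuous_on UNIV \<phi>" "\<And>r. 0 \<le> \<phi> r" "mono \<phi>"
    and s: "s \<in> {0..T}" and y: "continuous_on {0..T} y1" "continuous_on {0..T} y2"
    and D: "\<And>r. r \<in> {0..s} \<Longrightarrow> norm (y1 r - y2 r) \<le> D * \<phi> r"
  shows "norm (kernel_integral y1 s - kernel_integral y2 s)
    \<le> C * D * set_lebesgue_integral lborel {0..s} (\<lambda>r. \<bar>L r\<bar> * \<phi> r)"
proof -
  have diff: "set_integrable lborel {0..s} (\<lambda>r. K s r (F r (y1 r)) - K s r (F r (y2 r)))"
    using set_integrable_kernel_integrand[OF s] y by (intro set_integral_diff(1))
  have "set_integrable lborel {0..s} (\<lambda>r. \<bar>L r\<bar> * \<phi> r)"
    using set_integrable_subset[OF set_integrable_abs[OF L_integrable], of "{0..s}"] s \<phi>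
      borel_measurable_continuous_onI[OF \<phi>(1)]
    by (intro set_integrable_mult_bounded[where B = "\<phi> s"]) (auto simp: mono_def)
  then have bound: "set_integrable lborel {0..s} (\<lambda>r. C * D * (\<bar>L r\<bar> * \<phi> r))" by simp
  have "norm (kernel_integral y1 s - kernel_integral y2 s)
      = norm (set_lebesgue_integral lborel {0..s} (\<lambda>r. K s r (F r (y1 r)) - K s r (F r (y2 r))))"
    unfolding kernel_integral_def using set_integrable_kernel_integrand[OF s] y
    by (simp add: set_integral_diff(2))
  also have "\<dots> \<le> set_lebesgue_integral lborel {0..s} (\<lambda>r. norm (K s r (F r (y1 r)) - K s r (F r (y2 r))))"
    by (rule set_integral_norm_bound[OF diff])
  also have "\<dots> \<le> set_lebesgue_integral lborel {0..s} (\<lambda>r. C * D * (\<bar>L r\<bar> * \<phi> r))"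
  proof (rule set_integral_mono[OF set_integrable_norm[OF diff] bound])
    fix r assume r: "r \<in> {0..s}"
    have "norm (K s r (F r (y1 r)) - K s r (F r (y2 r))) \<le> C * \<bar>L r\<bar> * norm (y1 r - y2 r)"
      using r s by (intro kernel_integrand_lipschitz[OF C]) auto
    also have "\<dots> \<le> C * \<bar>L r\<bar> * (D * \<phi> r)" using D[OF r] C(2) by (simp add: mult_left_mono)
    finally show "norm (K s r (F r (y1 r)) - K s r (F r (y2 r))) \<le> C * D * (\<bar>L r\<bar> * \<phi> r)"
      by (simp add: algebra_simps)
  qed
  also have "\<dots> = C * D * set_lebesgue_integral lborel {0..s} (\<lambda>r. \<bar>L r\<bar> * \<phi> r)" by simp
  finally show ?thesis .
qed

text \<open>The weight \<open>\<rho>\<close> is chosen so that \<open>C \<integral>\<^sub>0\<^sup>t |L| \<rho> \<le> \<rho>(t)/2\<close>, where \<open>C\<close> bounds the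
  kernel; in the norm \<open>sup |y(t)|/\<rho>(t)\<close> the integral operator then has Lipschitz constant \<open>1/2\<close>.\<close>

lemma kernel_integral_weighted_contraction:
  obtains \<rho> where "continuous_on UNIV \<rho>" "\<And>r. 0 < \<rho> r"
    "\<And>y1 y2 D t. continuous_on {0..T} y1 \<Longrightarrow> continuous_on {0..T} y2 \<Longrightarrow>
      (\<And>r. r \<in> {0..T} \<Longrightarrow> norm (y1 r - y2 r) \<le> D * \<rho> r) \<Longrightarrow> t \<in> {0..T} \<Longrightarrow>
      norm (kernel_integral y1 t - kernel_integral y2 t) \<le> 1 / 2 * D * \<rho> t"
proof -
  obtain C where C: "0 \<le> C" "\<And>t r z. 0 \<le> r \<Longrightarrow> r \<le> t \<Longrightarrow> t \<le> T \<Longrightarrow> norm (K t r z) \<le> C * norm z"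
    using kernel_bound by blast
  define \<epsilon> where "\<epsilon> = 1 / (2 * (C + 1))"
  have \<epsilon>: "0 < \<epsilon>" "C * \<epsilon> \<le> 1 / 2" using C(1) by (simp_all add: \<epsilon>_def field_simps)
  obtain \<rho> where \<rho>: "continuous_on UNIV \<rho>" "\<And>r. 0 < \<rho> r" "mono \<rho>"
    and absorb: "\<And>t. t \<in> {0..T} \<Longrightarrow> set_lebesgue_integral lborel {0..t} (\<lambda>r. \<bar>L r\<bar> * \<rho> r) \<le> \<epsilon> * \<rho> t"
    using exists_absorbing_weight[OF set_integrable_abs[OF L_integrable] abs_ge_zero \<epsilon>(1)] by blast
  show ?thesis
  proof (rule that[OF \<rho>(1,2)])
    fix y1 y2 :: "real \<Rightarrow> 'v" and D t :: real
    assume y: "continuous_on {0..T} y1" "continuous_on {0..T} y2"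
      and D: "\<And>r. r \<in> {0..T} \<Longrightarrow> norm (y1 r - y2 r) \<le> D * \<rho> r" and t: "t \<in> {0..T}"
    have "0 \<le> D * \<rho> t" using D[OF t] norm_ge_zero order_trans by blast
    then have "0 \<le> D" using \<rho>(2)[of t] by (simp add: zero_le_mult_iff)
    have "norm (kernel_integral y1 t - kernel_integral y2 t)
        \<le> C * D * set_lebesgue_integral lborel {0..t} (\<lambda>r. \<bar>L r\<bar> * \<rho> r)"
      using D t by (intro kernel_integral_lipschitz[OF C(2,1) \<rho>(1) less_imp_le[OF \<rho>(2)] \<rho>(3) t y]) auto
    also have "\<dots> \<le> C * D * (\<epsilon> * \<rho> t)"
      using absorb[OF t] C(1) \<open>0 \<le> D\<close> by (intro mult_left_mono) auto
    also have "\<dots> = (C * \<epsilon>) * (D * \<rho> t)" by (simp add: algebra_simps)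
    also have "\<dots> \<le> 1 / 2 * (D * \<rho> t)" by (rule mult_right_mono[OF \<epsilon>(2) \<open>0 \<le> D * \<rho> t\<close>])
    finally show "norm (kernel_integral y1 t - kernel_integral y2 t) \<le> 1 / 2 * D * \<rho> t"
      by (simp add: mult.assoc)
  qed
qed

definition mild_solution :: "'v \<Rightarrow> (real \<Rightarrow> 'v) \<Rightarrow> bool" where
  "mild_solution x y \<longleftrightarrow> continuous_on {0..T} y \<and> (\<forall>t\<in>{0..T}. y t = K t 0 x + kernel_integral y t)"

lemma mild_solution_iff:
  "mild_solution x y \<longleftrightarrow> continuous_on {0..T} y \<and> (\<forall>t\<in>{0..T}.
     set_integrable lborel {0..t} (\<lambda>r. K t r (F r (y r))) \<and>
     y t = K t 0 x + set_lebesgue_integral lborel {0..t} (\<lambda>r. K t r (F r (y r))))"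
  by (auto simp: mild_solution_def kernel_integral_def intro: set_integrable_kernel_integrand)

theorem mild_solution_exists_unique:
  "\<exists>y. mild_solution x y \<and> (\<forall>z. mild_solution x z \<longrightarrow> (\<forall>t\<in>{0..T}. z t = y t))"
proof -
  obtain \<rho> where \<rho>: "continuous_on UNIV \<rho>" "\<And>r. 0 < \<rho> r"
    and contraction: "\<And>y1 y2 D t. continuous_on {0..T} y1 \<Longrightarrow> continuous_on {0..T} y2 \<Longrightarrow>
      (\<And>r. r \<in> {0..T} \<Longrightarrow> norm (y1 r - y2 r) \<le> D * \<rho> r) \<Longrightarrow> t \<in> {0..T} \<Longrightarrow>
      norm (kernel_integral y1 t - kernel_integral y2 t) \<le> 1 / 2 * D * \<rho> t"
    using kernel_integral_weighted_contraction by blast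
  define \<Phi> where "\<Phi> y t = K t 0 x + kernel_integral y t" for y t
  have "\<exists>y. continuous_on {0..T} y \<and> (\<forall>t\<in>{0..T}. \<Phi> y t = y t) \<and>
      (\<forall>z. continuous_on {0..T} z \<and> (\<forall>t\<in>{0..T}. \<Phi> z t = z t) \<longrightarrow> (\<forall>t\<in>{0..T}. z t = y t))"
  proof (rule weighted_contraction_fixed_point_Icc[OF T_nonneg _ _ continuous_on_subset[OF \<rho>(1) subset_UNIV] \<rho>(2)])
    show "continuous_on {0..T} (\<Phi> y)" if "continuous_on {0..T} y" for y
      unfolding \<Phi>_def by (intro continuous_on_add continuous_on_kernel_at_zero continuous_on_kernel_integral that)
    show "norm (\<Phi> y1 t - \<Phi> y2 t) \<le> 1 / 2 * D * \<rho> t"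
      if "continuous_on {0..T} y1" "continuous_on {0..T} y2"
        "\<And>r. r \<in> {0..T} \<Longrightarrow> norm (y1 r - y2 r) \<le> D * \<rho> r" "t \<in> {0..T}" for y1 y2 D t
      using contraction[OF that] by (simp add: \<Phi>_def)
  qed auto
  then obtain y where y: "continuous_on {0..T} y" "\<And>t. t \<in> {0..T} \<Longrightarrow> \<Phi> y t = y t"
    and unique: "\<And>z. continuous_on {0..T} z \<Longrightarrow> \<forall>t\<in>{0..T}. \<Phi> z t = z t \<Longrightarrow> \<forall>t\<in>{0..T}. z t = y t"
    by blast
  have "mild_solution x y" using y by (simp add: mild_solution_def \<Phi>_def)
  moreover have "\<forall>t\<in>{0..T}. z t = y t" if "mild_solution x z" for z
    using that unique[of z] by (simp add: mild_solution_def \<Phi>_def)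
  ultimately show ?thesis by blast
qed

end

section \<open>The equation driven by fractional Brownian motion\<close>

lemma continuous_on_random_evolution:
  fixes SB :: "real \<Rightarrow> 'v::banach \<Rightarrow> 'v" and U :: "real \<Rightarrow> real \<Rightarrow> 'v \<Rightarrow> 'v"
  assumes SB: "\<And>u. bounded_linear (SB u)" "\<And>z. continuous_on UNIV (\<lambda>u. SB u z)"
    and U: "\<And>z. continuous_on {(t, s). 0 \<le> s \<and> s \<le> t \<and> t \<le> T} (\<lambda>(t, s). U t s z)"
    and BH: "continuous_on {0..T} (\<lambda>t. BH t \<omega>)"
  shows "continuous_on {(t, r). 0 \<le> r \<and> r \<le> t \<and> t \<le> T} (\<lambda>(t, r). UY SB U BH \<omega> t r z)"
proof -
  define tri where "tri = {(t, r). 0 \<le> r \<and> r \<le> t \<and> t \<le> T}"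
  obtain R where R: "\<And>t. t \<in> {0..T} \<Longrightarrow> norm (BH t \<omega>) \<le> R"
    using continuous_on_compact_bound[OF compact_Icc BH] by blast
  have increment: "BH (fst p) \<omega> - BH (snd p) \<omega> \<in> {-2*R..2*R}" if "p \<in> tri" for p
    using R[of "fst p"] R[of "snd p"] that by (auto simp: tri_def)
  obtain CS where "\<And>u z. u \<in> {-2*R..2*R} \<Longrightarrow> norm (SB u z) \<le> CS * norm z"
    using strongly_continuous_uniform_bound[OF compact_Icc SB(1) continuous_on_subset[OF SB(2)]] by blast
  then have SB_joint: "continuous_on ({-2*R..2*R} \<times> UNIV) (\<lambda>q. SB (fst q) (snd q))"
    by (intro continuous_on_bounded_linear_family[OF SB(1)] continuous_on_subset[OF SB(2)]) auto
  have "continuous_on tri (\<lambda>p. BH (fst p) \<omega> - BH (snd p) \<omega>)"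
    by (intro continuous_intros continuous_on_compose2[OF BH]) (auto simp: tri_def)
  moreover have "continuous_on tri ((\<lambda>(t, s). U t s z) \<circ> (\<lambda>p. (fst p - snd p, 0)))"
    by (rule continuous_on_compose[OF _ continuous_on_subset[OF U[of z]]])
      (auto simp: tri_def intro!: continuous_intros)
  then have "continuous_on tri (\<lambda>p. U (fst p - snd p) 0 z)" by (simp add: o_def)
  ultimately have "continuous_on tri (\<lambda>p. (BH (fst p) \<omega> - BH (snd p) \<omega>, U (fst p - snd p) 0 z))"
    by (rule continuous_on_Pair)
  then have "continuous_on tri ((\<lambda>q. SB (fst q) (snd q)) \<circ> (\<lambda>p. (BH (fst p) \<omega> - BH (snd p) \<omega>, U (fst p - snd p) 0 z)))"
    by (rule continuous_on_compose[OF _ continuous_on_subset[OF SB_joint]]) (use increment in auto)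
  then show ?thesis by (simp add: o_def tri_def UY_def case_prod_beta)
qed

theorem mainTheorem1:
  fixes M :: "'w measure" and BH :: "real \<Rightarrow> 'w \<Rightarrow> real"
    and H T w Mr \<alpha> :: real
    and A B :: "'v::{real_inner, banach, second_countable_topology} \<Rightarrow> 'v"
    and D DB :: "'v set"
    and SB :: "real \<Rightarrow> 'v \<Rightarrow> 'v" and U :: "real \<Rightarrow> real \<Rightarrow> 'v \<Rightarrow> 'v"
    and F :: "real \<Rightarrow> 'v \<Rightarrow> 'v" and Lbar Kbar :: "real \<Rightarrow> real" and x :: 'v
  assumes prob: "prob_space M" and compl: "complete_measure M"
    and H: "1/2 < H" "H < 1"
    and fbm: "fBm M H BH"
    and T: "0 < T"
    and A1: "lin_op A D" "closed_op A D" "densely_defined D"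
    and A2: "w < 0" "0 < Mr" "resolvent_condition A D w Mr"
    and B1: "adj_dom A D \<subseteq> adj_sq_dom B DB"
    and B2: "lin_op B DB" "closed_op B DB" "densely_defined DB" "generates_C0_group B DB SB"
    and B3: "closed_op (\<lambda>z. B (B z)) (sq_dom B DB)" "0 < \<alpha>" "\<alpha> < 1"
            "frac_pow_dom A D \<alpha> \<subseteq> sq_dom B DB"
    and AB: "\<forall>u. \<forall>z\<in>D. SB u z \<in> D \<and> SB u (A z) = A (SB u z)"
    and U: "evolution_system_gen (\<lambda>t z. A z - (H * t powr (2 * H - 1)) *\<^sub>R B (B z)) D T U"
    and Fmeas: "(\<lambda>p. F (fst p) (snd p)) \<in> borel_measurable (restrict_space borel ({0..T} \<times> UNIV))"
    and Lip: "set_integrable lborel {0..T} Lbar"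
             "\<forall>t\<in>{0..T}. \<forall>u v. norm (F t u - F t v) \<le> Lbar t * norm (u - v)"
    and Kb: "set_integrable lborel {0..T} Kbar"
            "\<forall>t\<in>{0..T}. norm (F t 0) \<le> Kbar t"
  shows "AE \<omega> in M. \<exists>y. is_solution SB U BH \<omega> F T x y \<and>
           (\<forall>z. is_solution SB U BH \<omega> F T x z \<longrightarrow> (\<forall>t\<in>{0..T}. z t = y t))"
proof (rule AE_I2)
  fix \<omega> assume "\<omega> \<in> space M"
  then have "continuous_on {0..} (\<lambda>t. BH t \<omega>)" using fbm unfolding fBm_def by blast
  then have BH: "continuous_on {0..T} (\<lambda>t. BH t \<omega>)" by (rule continuous_on_subset) auto
  have SB: "\<And>u. bounded_linear (SB u)" "\<And>z. continuous_on UNIV (\<lambda>u. SB u z)"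
    using B2(4) unfolding generates_C0_group_def by blast+
  have U_linear: "\<And>s t. 0 \<le> s \<and> s \<le> t \<and> t \<le> T \<Longrightarrow> bounded_linear (U t s)"
    and U_cont: "\<And>z. continuous_on {(t, s). 0 \<le> s \<and> s \<le> t \<and> t \<le> T} (\<lambda>(t, s). U t s z)"
    using U unfolding evolution_system_gen_def by blast+
  have "bounded_linear (UY SB U BH \<omega> t r)" if "0 \<le> r" "r \<le> t" "t \<le> T" for t r
    using bounded_linear_compose[OF SB(1) U_linear[of 0 "t - r"]] that by (simp add: UY_def[abs_def])
  then interpret volterra_equation "UY SB U BH \<omega>" F T Lbar Kbar
    using T Fmeas Lip Kb continuous_on_random_evolution[where BH = BH and \<omega> = \<omega>, OF SB U_cont BH]
    by (intro volterra_equation.intro) auto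
  show "\<exists>y. is_solution SB U BH \<omega> F T x y \<and>
           (\<forall>z. is_solution SB U BH \<omega> F T x z \<longrightarrow> (\<forall>t\<in>{0..T}. z t = y t))"
    using mild_solution_exists_unique[of x] by (simp add: is_solution_def mild_solution_iff)
qed

end
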